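(* Fix $\tau>0$. For $n\ge1$ let $W_n$ be an $n\times n$ matrix of independent $\mathcal N(0,1)$ entries, and let $\Gamma_k(\tau,n)$ be the number of $k\times k$ submatrices $U$ of $W_n$ (row set and column set arbitrary $k$-subsets of $\{1,\dots,n\}$) whose entry average $F(U)$ satisfies $F(U)\ge\tau$. When $k$ is sufficiently large, for every integer $n$ satisfying \[ k\le\frac{4}{\tau^2}\ln n-\frac{4}{\tau^2}\ln\!\left(\frac{4}{\tau^2}\ln n\right)-\frac{12\ln2}{\tau^2}, \] we have \[ \frac{\operatorname{Var}\Gamma_k(\tau,n)}{(E\,\Gamma_k(\tau,n))^2}\le k^{-2}. \] *)

theory Defs
  imports "HOL-Probability.Probability"
begin

definition gauss_matrix :: "nat \<Rightarrow> ((nat \<times> nat) \<Rightarrow> real) measure" where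
  "gauss_matrix n = PiM ({..<n} \<times> {..<n}) (\<lambda>_. density lborel std_normal_density)"

definition sub_avg :: "((nat \<times> nat) \<Rightarrow> real) \<Rightarrow> nat set \<Rightarrow> nat set \<Rightarrow> real" where
  "sub_avg W R C = (\<Sum>i\<in>R. \<Sum>j\<in>C. W (i, j)) / (real (card R) * real (card C))"

definition Gamma :: "nat \<Rightarrow> real \<Rightarrow> nat \<Rightarrow> ((nat \<times> nat) \<Rightarrow> real) \<Rightarrow> nat" where
  "Gamma k \<tau> n W = card {(R, C). R \<subseteq> {..<n} \<and> card R = k \<and> C \<subseteq> {..<n} \<and> card C = k
                                \<and> sub_avg W R C \<ge> \<tau>}"

definition E_Gamma :: "nat \<Rightarrow> real \<Rightarrow> nat \<Rightarrow> real" where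
  "E_Gamma k \<tau> n = integral\<^sup>L (gauss_matrix n) (\<lambda>W. real (Gamma k \<tau> n W))"

definition Var_Gamma :: "nat \<Rightarrow> real \<Rightarrow> nat \<Rightarrow> real" where
  "Var_Gamma k \<tau> n = integral\<^sup>L (gauss_matrix n) (\<lambda>W. (real (Gamma k \<tau> n W) - E_Gamma k \<tau> n)\<^sup>2)"

end

theory Submission
  imports Defs "HOL-Real_Asymp.Real_Asymp"
begin

text \<open>Second moment method. \<open>\<Gamma>\<close> is a sum of indicators of the events
  "the block \<open>R \<times> C\<close> has entry sum at least \<open>\<tau>k\<^sup>2\<close>", so its variance is the sum of the
  covariances over pairs of blocks. Disjoint blocks are independent. For blocks sharing \<open>r\<close>
  rows and \<open>c\<close> columns, the sum of the two block sums is a centred Gaussian of variance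
  \<open>2k\<^sup>2 + 2rc\<close>, so both events together have probability at most
  \<open>exp (-\<tau>\<^sup>2k\<^sup>4 / (k\<^sup>2 + rc))\<close>, whereas a single event has probability of order
  \<open>exp (-\<tau>\<^sup>2k\<^sup>2/2) / (\<tau>k)\<close>. A block shares \<open>r\<close> rows with a fixed one with relative
  frequency at most \<open>(k choose r) (k/(n-k))\<^sup>r\<close>, and the upper bound on \<open>k\<close> forces
  \<open>n \<ge> 8k exp (\<tau>\<^sup>2k/4)\<close>. Hence each of the \<open>(k+1)\<^sup>2\<close> overlap classes contributes at
  most \<open>1/(4k\<^sup>4)\<close> to \<open>Var \<Gamma> / (E \<Gamma>)\<^sup>2\<close>: for \<open>r + c \<le> k\<close> the factor
  \<open>(k/(n-k))\<^sup>r\<^sup>+\<^sup>c\<close> beats the correlation, for \<open>r + c > k\<close> the factor \<open>4\<^sup>-\<^sup>k\<close> it contains does.\<close>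

section \<open>The Gaussian matrix\<close>

lemma prob_space_gauss_matrix: "prob_space (gauss_matrix n)"
  unfolding gauss_matrix_def
  by (auto intro!: prob_space_PiM prob_space_normal_density)

lemma sets_gauss_matrix: "sets (gauss_matrix n) = sets (PiM ({..<n}\<times>{..<n}) (\<lambda>_. borel))"
  unfolding gauss_matrix_def by (rule sets_PiM_cong) auto

lemma space_gauss_matrix: "space (gauss_matrix n) = ({..<n}\<times>{..<n}) \<rightarrow>\<^sub>E UNIV"
  unfolding gauss_matrix_def by (simp add: space_PiM)

lemma measurable_gauss_entry:
  "e \<in> {..<n}\<times>{..<n} \<Longrightarrow> (\<lambda>\<omega>. \<omega> e) \<in> borel_measurable (gauss_matrix n)"
  unfolding measurable_cong_sets[OF sets_gauss_matrix refl] by (rule measurable_component_singleton)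

lemma distr_gauss_entry:
  assumes "e \<in> {..<n}\<times>{..<n}" and "sets N = sets borel"
  shows "distr (gauss_matrix n) N (\<lambda>\<omega>. \<omega> e) = density lborel std_normal_density"
proof -
  have "distr (gauss_matrix n) N (\<lambda>\<omega>. \<omega> e)
      = distr (gauss_matrix n) (density lborel std_normal_density) (\<lambda>\<omega>. \<omega> e)"
    using assms(2) by (intro distr_cong) simp_all
  also have "\<dots> = density lborel std_normal_density"
    unfolding gauss_matrix_def using assms(1)
    by (intro distr_PiM_component) (auto intro: prob_space_normal_density)
  finally show ?thesis .
qed

lemma distributed_gauss_entry:
  assumes "e \<in> {..<n}\<times>{..<n}"
  shows "distributed (gauss_matrix n) lborel (\<lambda>\<omega>. \<omega> e) std_normal_density"
  using measurable_gauss_entry[OF assms] distr_gauss_entry[OF assms, of lborel]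
  by (simp add: distributed_def measurable_lborel1)

lemma indep_vars_gauss_entries:
  assumes "n > 0"
  shows "prob_space.indep_vars (gauss_matrix n) (\<lambda>_. borel) (\<lambda>e \<omega>. \<omega> e) ({..<n}\<times>{..<n})"
proof -
  interpret prob_space "gauss_matrix n" by (rule prob_space_gauss_matrix)
  let ?I = "{..<n}\<times>{..<n}"
  have "?I \<noteq> {}" using assms by auto
  moreover have "random_variable borel (\<lambda>\<omega>. \<omega> e)" for e
  proof (cases "e \<in> ?I")
    case True
    then show ?thesis using measurable_gauss_entry by simp
  next
    case False
    \<comment> \<open>off the index set every point of the space takes the value \<open>undefined\<close>\<close>
    have "(\<lambda>\<omega>. \<omega> e) \<in> borel_measurable (gauss_matrix n)
          \<longleftrightarrow> (\<lambda>\<omega>. undefined::real) \<in> borel_measurable (gauss_matrix n)"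
      by (rule measurable_cong)
         (use False in \<open>cases e, auto simp: space_gauss_matrix PiE_def extensional_def\<close>)
    then show ?thesis by simp
  qed
  moreover have "distr (gauss_matrix n) (Pi\<^sub>M ?I (\<lambda>i. borel)) (\<lambda>x. \<lambda>i\<in>?I. x i)
      = Pi\<^sub>M ?I (\<lambda>i. distr (gauss_matrix n) borel (\<lambda>\<omega>. \<omega> i))"
  proof -
    have "distr (gauss_matrix n) (Pi\<^sub>M ?I (\<lambda>i. borel)) (\<lambda>x. \<lambda>i\<in>?I. x i)
        = distr (gauss_matrix n) (Pi\<^sub>M ?I (\<lambda>i. borel)) (\<lambda>x. x)"
      by (rule distr_cong) (auto simp: space_gauss_matrix)
    also have "\<dots> = gauss_matrix n"
      by (rule distr_id2) (simp add: sets_gauss_matrix)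
    also have "\<dots> = Pi\<^sub>M ?I (\<lambda>i. distr (gauss_matrix n) borel (\<lambda>\<omega>. \<omega> i))"
      using distr_gauss_entry[of _ n borel] unfolding gauss_matrix_def[of n]
      by (intro PiM_cong) auto
    finally show ?thesis .
  qed
  ultimately show ?thesis
    by (subst indep_vars_iff_distr_eq_PiM) auto
qed

section \<open>Gaussian tail estimates\<close>

lemma nn_integral_normal_density:
  "\<sigma> > 0 \<Longrightarrow> (\<integral>\<^sup>+x. ennreal (normal_density \<mu> \<sigma> x) \<partial>lborel) = 1"
  by (subst nn_integral_eq_integral) (auto intro: integrable_normal_density integral_normal_density)

lemma normal_density_mult_exp:
  assumes "\<sigma> > 0"
  shows "normal_density 0 \<sigma> x * exp (l * x) = exp (l\<^sup>2 * \<sigma>\<^sup>2 / 2) * normal_density (l * \<sigma>\<^sup>2) \<sigma> x"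
proof -
  have "- x\<^sup>2 / (2 * \<sigma>\<^sup>2) + l * x = l\<^sup>2 * \<sigma>\<^sup>2 / 2 + (- (x - l * \<sigma>\<^sup>2)\<^sup>2 / (2 * \<sigma>\<^sup>2))"
    using assms by (simp add: field_simps power2_eq_square)
  then show ?thesis
    unfolding normal_density_def by (simp add: exp_add[symmetric])
qed

lemma normal_tail_le:
  assumes "prob_space M" and D: "distributed M lborel Y (normal_density 0 \<sigma>)"
    and "\<sigma> > 0" "a \<ge> 0"
  shows "measure M {\<omega>\<in>space M. Y \<omega> \<ge> a} \<le> exp (- a\<^sup>2 / (2 * \<sigma>\<^sup>2))"
proof -
  interpret prob_space M by fact
  \<comment> \<open>Chernoff bound with the optimal parameter \<open>l = a/\<sigma>\<^sup>2\<close>\<close>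
  define l where "l = a / \<sigma>\<^sup>2"
  have l: "l \<ge> 0" using assms by (simp add: l_def)
  have "emeasure M (Y -` {a..} \<inter> space M)
      = (\<integral>\<^sup>+x. ennreal (normal_density 0 \<sigma> x) * indicator {a..} x \<partial>lborel)"
    by (rule distributed_emeasure[OF D]) simp
  also have "\<dots> \<le> (\<integral>\<^sup>+x. ennreal (exp (- l * a)) * ennreal (normal_density 0 \<sigma> x * exp (l * x)) \<partial>lborel)"
  proof (rule nn_integral_mono)
    fix x
    have "indicator {a..} x \<le> exp (- l * a) * exp (l * x)"
      using l by (auto simp: indicator_def mult_left_mono simp flip: exp_add)
    then have "normal_density 0 \<sigma> x * indicator {a..} x
        \<le> exp (- l * a) * (normal_density 0 \<sigma> x * exp (l * x))"
      using normal_density_nonneg[of 0 \<sigma> x] by (simp add: mult_left_mono algebra_simps)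
    then show "ennreal (normal_density 0 \<sigma> x) * indicator {a..} x
        \<le> ennreal (exp (- l * a)) * ennreal (normal_density 0 \<sigma> x * exp (l * x))"
      by (cases "a \<le> x") (auto simp: ennreal_mult'[symmetric] indicator_def intro!: ennreal_leI)
  qed
  also have "\<dots> = ennreal (exp (- l * a)) * ennreal (exp (l\<^sup>2 * \<sigma>\<^sup>2 / 2))"
    using assms
    by (simp add: nn_integral_cmult normal_density_mult_exp ennreal_mult' nn_integral_normal_density)
  also have "\<dots> = ennreal (exp (- a\<^sup>2 / (2 * \<sigma>\<^sup>2)))"
  proof -
    have "- l * a + l\<^sup>2 * \<sigma>\<^sup>2 / 2 = - a\<^sup>2 / (2 * \<sigma>\<^sup>2)"
      using assms by (simp add: l_def field_simps power2_eq_square)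
    then show ?thesis by (simp add: ennreal_mult'[symmetric] exp_add[symmetric])
  qed
  finally show ?thesis
    by (simp add: emeasure_eq_measure vimage_def Int_def conj_commute)
qed

lemma normal_tail_ge:
  assumes "prob_space M" and D: "distributed M lborel Y (normal_density 0 \<sigma>)"
    and "\<sigma> > 0" "a \<ge> 0" "h > 0"
  shows "measure M {\<omega>\<in>space M. Y \<omega> \<ge> a} \<ge> h * normal_density 0 \<sigma> (a + h)"
proof -
  interpret prob_space M by fact
  have "ennreal (h * normal_density 0 \<sigma> (a + h))
      = (\<integral>\<^sup>+x. ennreal (normal_density 0 \<sigma> (a + h)) * indicator {a..a+h} x \<partial>lborel)"
    using assms by (simp add: nn_integral_cmult_indicator ennreal_mult' mult.commute)
  also have "\<dots> \<le> (\<integral>\<^sup>+x. ennreal (normal_density 0 \<sigma> x) * indicator {a..} x \<partial>lborel)"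
  proof (rule nn_integral_mono)
    fix x
    show "ennreal (normal_density 0 \<sigma> (a + h)) * indicator {a..a+h} x
        \<le> ennreal (normal_density 0 \<sigma> x) * indicator {a..} x"
    proof (cases "a \<le> x \<and> x \<le> a + h")
      case True
      then have "x\<^sup>2 \<le> (a + h)\<^sup>2" using assms by (intro power_mono) auto
      then have "normal_density 0 \<sigma> (a + h) \<le> normal_density 0 \<sigma> x"
        using assms unfolding normal_density_def
        by (intro mult_left_mono) (auto simp: divide_right_mono)
      then show ?thesis using True by (simp add: indicator_def)
    qed (auto simp: indicator_def)
  qed
  also have "\<dots> = emeasure M (Y -` {a..} \<inter> space M)"
    by (rule distributed_emeasure[OF D, symmetric]) simp
  finally show ?thesis
    using assms by (simp add: emeasure_eq_measure vimage_def Int_def conj_commute)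
qed

section \<open>Sums of Gaussian entries\<close>

lemma distributed_gauss_weighted_sum:
  assumes "n > 0" "A \<subseteq> {..<n}\<times>{..<n}" "A \<noteq> {}" "\<And>e. e \<in> A \<Longrightarrow> w e \<noteq> 0"
  shows "distributed (gauss_matrix n) lborel (\<lambda>\<omega>. \<Sum>e\<in>A. w e * \<omega> e)
           (normal_density 0 (sqrt (\<Sum>e\<in>A. (w e)\<^sup>2)))"
proof -
  interpret prob_space "gauss_matrix n" by (rule prob_space_gauss_matrix)
  have "finite A" using assms(2) finite_subset by blast
  moreover have "indep_vars (\<lambda>_. borel) (\<lambda>e \<omega>. w e * \<omega> e) A"
    using indep_vars_compose2[OF indep_vars_subset[OF indep_vars_gauss_entries[OF assms(1)] assms(2)],
        of "\<lambda>e x. w e * x" "\<lambda>_. borel"]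
    by simp
  moreover have "distributed (gauss_matrix n) lborel (\<lambda>\<omega>. w e * \<omega> e) (normal_density 0 \<bar>w e\<bar>)"
    if "e \<in> A" for e
    using normal_density_affine[OF distributed_gauss_entry, where \<alpha>="w e" and \<beta>=0] that assms
    by auto
  ultimately have "distributed (gauss_matrix n) lborel (\<lambda>\<omega>. \<Sum>e\<in>A. w e * \<omega> e)
      (normal_density (\<Sum>e\<in>A. 0) (sqrt (\<Sum>e\<in>A. \<bar>w e\<bar>\<^sup>2)))"
    using assms by (intro sum_indep_normal) auto
  then show ?thesis by simp
qed

lemma distributed_gauss_sum:
  assumes "n > 0" "A \<subseteq> {..<n}\<times>{..<n}" "A \<noteq> {}"
  shows "distributed (gauss_matrix n) lborel (\<lambda>\<omega>. \<Sum>e\<in>A. \<omega> e) (normal_density 0 (sqrt (card A)))"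
  using distributed_gauss_weighted_sum[OF assms, of "\<lambda>_. 1"] by simp

lemma prob_gauss_sums_ge_disjoint:
  assumes "n > 0" "A \<subseteq> {..<n}\<times>{..<n}" "B \<subseteq> {..<n}\<times>{..<n}" "A \<inter> B = {}"
  shows "measure (gauss_matrix n)
           {\<omega>\<in>space (gauss_matrix n). y \<le> (\<Sum>e\<in>A. \<omega> e) \<and> y \<le> (\<Sum>e\<in>B. \<omega> e)}
       = measure (gauss_matrix n) {\<omega>\<in>space (gauss_matrix n). y \<le> (\<Sum>e\<in>A. \<omega> e)}
         * measure (gauss_matrix n) {\<omega>\<in>space (gauss_matrix n). y \<le> (\<Sum>e\<in>B. \<omega> e)}"
proof -
  interpret prob_space "gauss_matrix n" by (rule prob_space_gauss_matrix)
  have restrict_sum: "(\<lambda>f. \<Sum>e\<in>X. f e) \<circ> (\<lambda>\<omega>. restrict (\<lambda>e. \<omega> e) X) = (\<lambda>\<omega>. \<Sum>e\<in>X. \<omega> e)"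
    for X :: "(nat \<times> nat) set"
    by (auto simp: fun_eq_iff cong: rev_conj_cong)
  have "indep_var
    borel ((\<lambda>f. \<Sum>e\<in>A. f e) \<circ> (\<lambda>\<omega>. restrict (\<lambda>e. \<omega> e) A))
    borel ((\<lambda>f. \<Sum>e\<in>B. f e) \<circ> (\<lambda>\<omega>. restrict (\<lambda>e. \<omega> e) B))"
    using assms
    by (intro indep_var_compose[OF indep_var_restrict[OF indep_vars_gauss_entries[OF assms(1)]]]) auto
  then have "\<P>(x in gauss_matrix n. (\<Sum>e\<in>A. x e) \<in> {y..} \<and> (\<Sum>e\<in>B. x e) \<in> {y..})
     = \<P>(x in gauss_matrix n. (\<Sum>e\<in>A. x e) \<in> {y..}) * \<P>(x in gauss_matrix n. (\<Sum>e\<in>B. x e) \<in> {y..})"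
    unfolding restrict_sum by (rule prob_indep_random_variable) auto
  then show ?thesis by simp
qed

lemma prob_gauss_sums_ge_le:
  assumes "n > 0" "A \<subseteq> {..<n}\<times>{..<n}" "B \<subseteq> {..<n}\<times>{..<n}" "A \<noteq> {}" "y \<ge> 0"
  shows "measure (gauss_matrix n)
           {\<omega>\<in>space (gauss_matrix n). y \<le> (\<Sum>e\<in>A. \<omega> e) \<and> y \<le> (\<Sum>e\<in>B. \<omega> e)}
       \<le> exp (- (2*y)\<^sup>2 / (2 * (card A + card B + 2 * card (A \<inter> B))))"
proof -
  interpret prob_space "gauss_matrix n" by (rule prob_space_gauss_matrix)
  \<comment> \<open>both events imply that the sum of the two block sums is at least \<open>2y\<close>\<close>
  define w where "w e = (if e \<in> A then 1 else 0) + (if e \<in> B then 1 else (0::real))" for e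
  have fin: "finite A" "finite B" using assms finite_subset by blast+
  have AB: "A \<union> B \<subseteq> {..<n}\<times>{..<n}" "A \<union> B \<noteq> {}" using assms by auto
  have D: "distributed (gauss_matrix n) lborel (\<lambda>\<omega>. \<Sum>e\<in>A \<union> B. w e * \<omega> e)
           (normal_density 0 (sqrt (\<Sum>e\<in>A \<union> B. (w e)\<^sup>2)))"
    by (rule distributed_gauss_weighted_sum[OF assms(1) AB]) (auto simp: w_def)
  have sum_w: "(\<Sum>e\<in>A \<union> B. w e * \<omega> e) = (\<Sum>e\<in>A. \<omega> e) + (\<Sum>e\<in>B. \<omega> e)" for \<omega>
  proof -
    have "(\<Sum>e\<in>A \<union> B. w e * \<omega> e)
        = (\<Sum>e\<in>A \<union> B. (if e \<in> A then \<omega> e else 0)) + (\<Sum>e\<in>A \<union> B. (if e \<in> B then \<omega> e else 0))"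
      by (simp add: sum.distrib[symmetric]) (intro sum.cong, auto simp: w_def algebra_simps)
    then show ?thesis
      using fin by (simp add: sum.If_cases Int_absorb1 Int_absorb2)
  qed
  have sum_w_sq: "(\<Sum>e\<in>A \<union> B. (w e)\<^sup>2) = real (card A + card B + 2 * card (A \<inter> B))"
  proof -
    have "(\<Sum>e\<in>A \<union> B. (w e)\<^sup>2) = (\<Sum>e\<in>A \<union> B. (if e \<in> A then 1 else 0) + (if e \<in> B then 1 else 0)
        + 2 * (if e \<in> A \<inter> B then 1 else (0::real)))"
      by (intro sum.cong) (auto simp: w_def power2_eq_square)
    also have "(A \<union> B) \<inter> {e \<in> A. e \<in> B} = A \<inter> B" by auto
    then have "(\<Sum>e\<in>A \<union> B. (if e \<in> A then 1 else 0) + (if e \<in> B then 1 else 0)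
        + 2 * (if e \<in> A \<inter> B then 1 else (0::real)))
        = real (card A) + real (card B) + 2 * real (card (A \<inter> B))"
      using fin by (simp add: sum.distrib sum_distrib_left[symmetric] sum.If_cases Int_absorb1
          Int_absorb2 Int_commute)
    finally show ?thesis by simp
  qed
  have "0 < (\<Sum>e\<in>A \<union> B. (w e)\<^sup>2)"
    unfolding sum_w_sq using assms(4) fin by (simp add: card_gt_0_iff add_pos_nonneg)
  have "measure (gauss_matrix n)
           {\<omega>\<in>space (gauss_matrix n). y \<le> (\<Sum>e\<in>A. \<omega> e) \<and> y \<le> (\<Sum>e\<in>B. \<omega> e)}
      \<le> measure (gauss_matrix n) {\<omega>\<in>space (gauss_matrix n). 2*y \<le> (\<Sum>e\<in>A \<union> B. w e * \<omega> e)}"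
    using distributed_measurable[OF D] by (intro finite_measure_mono) (auto simp: sum_w)
  also have "\<dots> \<le> exp (- (2*y)\<^sup>2 / (2 * (sqrt (\<Sum>e\<in>A \<union> B. (w e)\<^sup>2))\<^sup>2))"
    using \<open>0 < (\<Sum>e\<in>A \<union> B. (w e)\<^sup>2)\<close> assms
    by (intro normal_tail_le[OF prob_space_gauss_matrix D]) auto
  also have "\<dots> = exp (- (2*y)\<^sup>2 / (2 * (card A + card B + 2 * card (A \<inter> B))))"
    using sum_w_sq by (simp add: sum_nonneg)
  finally show ?thesis .
qed

section \<open>Expectation and variance as sums over blocks\<close>

definition k_subsets :: "nat \<Rightarrow> nat \<Rightarrow> nat set set" where
  "k_subsets n k = {R. R \<subseteq> {..<n} \<and> card R = k}"

definition submatrices :: "nat \<Rightarrow> nat \<Rightarrow> (nat set \<times> nat set) set" where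
  "submatrices n k = k_subsets n k \<times> k_subsets n k"

definition block :: "nat set \<times> nat set \<Rightarrow> (nat \<times> nat) set" where
  "block u = fst u \<times> snd u"

definition heavy_event :: "nat \<Rightarrow> real \<Rightarrow> nat set \<times> nat set \<Rightarrow> (nat \<times> nat \<Rightarrow> real) set" where
  "heavy_event n y u = {\<omega>\<in>space (gauss_matrix n). y \<le> (\<Sum>e\<in>block u. \<omega> e)}"

lemma finite_k_subsets: "finite (k_subsets n k)"
  unfolding k_subsets_def by (rule finite_subset[of _ "Pow {..<n}"]) auto

lemma finite_submatrices: "finite (submatrices n k)"
  unfolding submatrices_def using finite_k_subsets by simp

lemma card_k_subsets: "card (k_subsets n k) = n choose k"
  unfolding k_subsets_def using n_subsets[of "{..<n}" k] by simp

lemma k_subsets_empty: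
  assumes "n < k"
  shows "k_subsets n k = {}"
proof -
  have "card R \<noteq> k" if "R \<subseteq> {..<n}" for R
    using card_mono[OF finite_lessThan that] assms by simp
  then show ?thesis unfolding k_subsets_def by blast
qed

lemma card_Int_k_subset_le: "R \<in> k_subsets n k \<Longrightarrow> card (R \<inter> R') \<le> k"
  unfolding k_subsets_def using card_mono[of R "R \<inter> R'"] finite_subset[of R "{..<n}"] by auto

lemma block_subset: "u \<in> submatrices n k \<Longrightarrow> block u \<subseteq> {..<n}\<times>{..<n}"
  by (auto simp: submatrices_def k_subsets_def block_def)

lemma card_block: "u \<in> submatrices n k \<Longrightarrow> card (block u) = k * k"
  by (auto simp: submatrices_def k_subsets_def block_def card_cartesian_product)

lemma block_nonempty: "u \<in> submatrices n k \<Longrightarrow> k \<ge> 1 \<Longrightarrow> block u \<noteq> {}"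
  using card_block[of u n k] by (metis card.empty mult_is_0 not_one_le_zero)

lemma n_pos_of_submatrices: "u \<in> submatrices n k \<Longrightarrow> k \<ge> 1 \<Longrightarrow> n > 0"
  by (auto simp: submatrices_def k_subsets_def intro: gr0I)

lemma card_block_Int: "card (block u \<inter> block v) = card (fst u \<inter> fst v) * card (snd u \<inter> snd v)"
  by (simp add: block_def Times_Int_Times card_cartesian_product)

lemma heavy_event_sets:
  assumes "u \<in> submatrices n k"
  shows "heavy_event n y u \<in> sets (gauss_matrix n)"
proof -
  have "(\<lambda>\<omega>. \<Sum>e\<in>block u. \<omega> e) \<in> borel_measurable (gauss_matrix n)"
    using block_subset[OF assms] measurable_gauss_entry by (intro borel_measurable_sum) blast
  then show ?thesis unfolding heavy_event_def by measurable
qed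

lemma heavy_event_subset_space: "heavy_event n y u \<subseteq> space (gauss_matrix n)"
  by (auto simp: heavy_event_def)

lemma integrable_heavy_event:
  assumes "u \<in> submatrices n k"
  shows "integrable (gauss_matrix n) (indicator (heavy_event n y u) :: _ \<Rightarrow> real)"
proof -
  interpret prob_space "gauss_matrix n" by (rule prob_space_gauss_matrix)
  show ?thesis
    by (rule integrable_real_indicator[OF heavy_event_sets[OF assms]]) (simp add: less_top[symmetric])
qed

lemma sub_avg_ge_iff:
  assumes "(R, C) \<in> submatrices n k" "k \<ge> 1"
  shows "\<tau> \<le> sub_avg W R C \<longleftrightarrow> \<tau> * (real k)\<^sup>2 \<le> (\<Sum>e\<in>block (R, C). W e)"
proof -
  have R: "card R = k" and C: "card C = k" using assms by (auto simp: submatrices_def k_subsets_def)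
  have "(\<Sum>i\<in>R. \<Sum>j\<in>C. W (i, j)) = (\<Sum>e\<in>block (R, C). W e)"
    unfolding block_def by (simp add: sum.cartesian_product)
  then show ?thesis
    unfolding sub_avg_def R C using assms(2) by (simp add: le_divide_eq power2_eq_square)
qed

lemma Gamma_eq_sum_indicator:
  assumes "k \<ge> 1" "W \<in> space (gauss_matrix n)"
  shows "real (Defs.Gamma k \<tau> n W)
       = (\<Sum>u\<in>submatrices n k. indicator (heavy_event n (\<tau> * (real k)\<^sup>2) u) W)"
proof -
  have "{(R, C). R \<subseteq> {..<n} \<and> card R = k \<and> C \<subseteq> {..<n} \<and> card C = k \<and> \<tau> \<le> sub_avg W R C}
      = {u \<in> submatrices n k. W \<in> heavy_event n (\<tau> * (real k)\<^sup>2) u}"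
    using sub_avg_ge_iff[OF _ assms(1)] assms(2)
    by (auto simp: heavy_event_def submatrices_def k_subsets_def)
  then show ?thesis
    unfolding Gamma_def using finite_submatrices[of n k]
    by (simp add: indicator_def sum.If_cases Int_def)
qed

lemma E_Gamma_eq_sum_prob:
  assumes "k \<ge> 1"
  shows "E_Gamma k \<tau> n
       = (\<Sum>u\<in>submatrices n k. measure (gauss_matrix n) (heavy_event n (\<tau> * (real k)\<^sup>2) u))"
proof -
  let ?A = "heavy_event n (\<tau> * (real k)\<^sup>2)"
  have "E_Gamma k \<tau> n = integral\<^sup>L (gauss_matrix n) (\<lambda>W. \<Sum>u\<in>submatrices n k. indicator (?A u) W)"
    unfolding E_Gamma_def
    by (rule Bochner_Integration.integral_cong) (simp_all add: Gamma_eq_sum_indicator[OF assms])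
  also have "\<dots> = (\<Sum>u\<in>submatrices n k. integral\<^sup>L (gauss_matrix n) (indicator (?A u)))"
    by (rule Bochner_Integration.integral_sum) (rule integrable_heavy_event)
  also have "\<dots> = (\<Sum>u\<in>submatrices n k. measure (gauss_matrix n) (?A u))"
    by (intro sum.cong refl) (simp add: Int_absorb2[OF heavy_event_subset_space])
  finally show ?thesis .
qed

lemma integral_indicator_covariance:
  assumes "prob_space M" "A \<in> sets M" "B \<in> sets M"
  shows "integrable M (\<lambda>x. (indicator A x - measure M A) * (indicator B x - measure M B) :: real)"
    and "integral\<^sup>L M (\<lambda>x. (indicator A x - measure M A) * (indicator B x - measure M B) :: real)
       = measure M (A \<inter> B) - measure M A * measure M B"
proof -
  interpret prob_space M by fact
  have AB: "A \<inter> B \<in> sets M" using assms by auto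
  have ia: "integrable M (indicator A :: _ \<Rightarrow> real)" and ib: "integrable M (indicator B :: _ \<Rightarrow> real)"
    and iab: "integrable M (indicator (A \<inter> B) :: _ \<Rightarrow> real)"
    using assms AB by (auto intro!: integrable_real_indicator simp: less_top[symmetric])
  have eq: "(\<lambda>x. (indicator A x - measure M A) * (indicator B x - measure M B) :: real)
      = (\<lambda>x. indicator (A \<inter> B) x - measure M B * indicator A x - measure M A * indicator B x
             + measure M A * measure M B)"
    by (auto simp: fun_eq_iff indicator_def algebra_simps)
  show "integrable M (\<lambda>x. (indicator A x - measure M A) * (indicator B x - measure M B) :: real)"
    unfolding eq using ia ib iab by simp
  show "integral\<^sup>L M (\<lambda>x. (indicator A x - measure M A) * (indicator B x - measure M B) :: real)
       = measure M (A \<inter> B) - measure M A * measure M B"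
    unfolding eq using ia ib iab assms AB
    by (simp add: Int_absorb2[OF sets.sets_into_space] prob_space)
qed

lemma Var_Gamma_eq_sum_cov:
  assumes "k \<ge> 1"
  shows "Var_Gamma k \<tau> n = (\<Sum>u\<in>submatrices n k. \<Sum>v\<in>submatrices n k.
      measure (gauss_matrix n) (heavy_event n (\<tau> * (real k)\<^sup>2) u \<inter> heavy_event n (\<tau> * (real k)\<^sup>2) v)
      - measure (gauss_matrix n) (heavy_event n (\<tau> * (real k)\<^sup>2) u)
        * measure (gauss_matrix n) (heavy_event n (\<tau> * (real k)\<^sup>2) v))"
proof -
  let ?M = "gauss_matrix n"
  let ?A = "heavy_event n (\<tau> * (real k)\<^sup>2)"
  let ?f = "\<lambda>u W. (indicator (?A u) W - measure ?M (?A u)) :: real"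
  have "(real (Defs.Gamma k \<tau> n W) - E_Gamma k \<tau> n)\<^sup>2
      = (\<Sum>u\<in>submatrices n k. \<Sum>v\<in>submatrices n k. ?f u W * ?f v W)"
    if "W \<in> space ?M" for W
  proof -
    have "real (Defs.Gamma k \<tau> n W) - E_Gamma k \<tau> n = (\<Sum>u\<in>submatrices n k. ?f u W)"
      unfolding Gamma_eq_sum_indicator[OF assms that] E_Gamma_eq_sum_prob[OF assms]
      by (simp add: sum_subtractf)
    then show ?thesis by (simp add: power2_eq_square sum_product)
  qed
  then have "Var_Gamma k \<tau> n
      = integral\<^sup>L ?M (\<lambda>W. \<Sum>u\<in>submatrices n k. \<Sum>v\<in>submatrices n k. ?f u W * ?f v W)"
    unfolding Var_Gamma_def by (rule Bochner_Integration.integral_cong[OF refl])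
  also have "\<dots> = (\<Sum>u\<in>submatrices n k. \<Sum>v\<in>submatrices n k. integral\<^sup>L ?M (\<lambda>W. ?f u W * ?f v W))"
  proof -
    have "integrable ?M (\<lambda>W. ?f u W * ?f v W)" if "u \<in> submatrices n k" "v \<in> submatrices n k" for u v
      using that by (intro integral_indicator_covariance(1) prob_space_gauss_matrix heavy_event_sets)
    then show ?thesis
      by (simp add: Bochner_Integration.integral_sum Bochner_Integration.integrable_sum)
  qed
  also have "\<dots> = (\<Sum>u\<in>submatrices n k. \<Sum>v\<in>submatrices n k.
      measure ?M (?A u \<inter> ?A v) - measure ?M (?A u) * measure ?M (?A v))"
    by (intro sum.cong refl integral_indicator_covariance(2) prob_space_gauss_matrix heavy_event_sets)
  finally show ?thesis .
qed

section \<open>Probabilities of heavy blocks\<close>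

lemma prob_heavy_event_ge:
  assumes u: "u \<in> submatrices n k" and k: "k \<ge> 1" and \<tau>: "\<tau> > 0" "\<tau> * real k \<ge> 1"
  shows "measure (gauss_matrix n) (heavy_event n (\<tau> * (real k)\<^sup>2) u)
     \<ge> exp (- (\<tau>\<^sup>2 * (real k)\<^sup>2 / 2)) / (\<tau> * real k * sqrt (2 * pi) * exp (3/2))"
proof -
  define K where "K = real k"
  have K: "K \<ge> 1" using k by (simp add: K_def)
  have D: "distributed (gauss_matrix n) lborel (\<lambda>\<omega>. \<Sum>e\<in>block u. \<omega> e) (normal_density 0 K)"
    using distributed_gauss_sum[OF n_pos_of_submatrices[OF u k] block_subset[OF u] block_nonempty[OF u k]]
    by (simp add: card_block[OF u] K_def)
  \<comment> \<open>the density on \<open>[\<tau>K\<^sup>2, \<tau>K\<^sup>2 + 1/\<tau>]\<close> is at least its value at the right end\<close>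
  have "(\<tau> * K\<^sup>2 + 1/\<tau>)\<^sup>2 / (2 * K\<^sup>2) = \<tau>\<^sup>2 * K\<^sup>2 / 2 + 1 + 1 / (2 * (\<tau> * K)\<^sup>2)"
    using \<tau> K by (simp add: field_simps power2_eq_square)
  moreover have "(\<tau> * K)\<^sup>2 \<ge> 1"
    using \<tau>(2) by (simp add: K_def one_le_power)
  then have "1 / (2 * (\<tau> * K)\<^sup>2) \<le> 1/2"
    by (simp add: field_simps)
  ultimately have "(\<tau> * K\<^sup>2 + 1/\<tau>)\<^sup>2 / (2 * K\<^sup>2) \<le> \<tau>\<^sup>2 * K\<^sup>2 / 2 + 3/2"
    by linarith
  then have "exp (- (\<tau>\<^sup>2 * K\<^sup>2 / 2)) / (\<tau> * K * sqrt (2 * pi) * exp (3/2))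
      \<le> (1/\<tau>) * (1 / (K * sqrt (2 * pi))) * exp (- ((\<tau> * K\<^sup>2 + 1/\<tau>)\<^sup>2 / (2 * K\<^sup>2)))"
    using \<tau> K by (simp add: exp_minus field_simps flip: exp_add)
  also have "\<dots> = (1/\<tau>) * normal_density 0 K (\<tau> * K\<^sup>2 + 1/\<tau>)"
    using K by (simp add: normal_density_def real_sqrt_mult)
  also have "\<dots> \<le> measure (gauss_matrix n) (heavy_event n (\<tau> * K\<^sup>2) u)"
    unfolding heavy_event_def
    using normal_tail_ge[OF prob_space_gauss_matrix D, of "\<tau> * K\<^sup>2" "1/\<tau>"] \<tau> K by simp
  finally show ?thesis by (simp add: K_def)
qed

text \<open>Covariance bound for two blocks sharing \<open>r\<close> rows and \<open>c\<close> columns; they are independent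
  if \<open>r = 0\<close> or \<open>c = 0\<close>.\<close>

definition overlap_cov_bound :: "real \<Rightarrow> nat \<Rightarrow> nat \<Rightarrow> nat \<Rightarrow> real" where
  "overlap_cov_bound \<tau> k r c =
     (if r = 0 \<or> c = 0 then 0 else exp (- (\<tau>\<^sup>2 * real k ^ 4) / ((real k)\<^sup>2 + real r * real c)))"

lemma overlap_cov_bound_nonneg: "overlap_cov_bound \<tau> k r c \<ge> 0"
  by (simp add: overlap_cov_bound_def)

lemma heavy_event_Int:
  "heavy_event n y u \<inter> heavy_event n y v
     = {\<omega>\<in>space (gauss_matrix n). y \<le> (\<Sum>e\<in>block u. \<omega> e) \<and> y \<le> (\<Sum>e\<in>block v. \<omega> e)}"
  by (auto simp: heavy_event_def)

lemma prob_heavy_events_both_le: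
  assumes u: "u \<in> submatrices n k" and v: "v \<in> submatrices n k" and k: "k \<ge> 1" and \<tau>: "\<tau> > 0"
  shows "measure (gauss_matrix n) (heavy_event n (\<tau> * (real k)\<^sup>2) u \<inter> heavy_event n (\<tau> * (real k)\<^sup>2) v)
      \<le> exp (- (\<tau>\<^sup>2 * real k ^ 4
                  / ((real k)\<^sup>2 + real (card (fst u \<inter> fst v)) * real (card (snd u \<inter> snd v)))))"
proof -
  let ?y = "\<tau> * (real k)\<^sup>2"
  define m where "m = real (card (fst u \<inter> fst v)) * real (card (snd u \<inter> snd v))"
  have "(2*?y)\<^sup>2 / (2 * real (card (block u) + card (block v) + 2 * card (block u \<inter> block v)))
      = (4 * (\<tau>\<^sup>2 * real k ^ 4)) / (4 * ((real k)\<^sup>2 + m))"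
    unfolding card_block[OF u] card_block[OF v] card_block_Int m_def
    by (simp add: power2_eq_square power4_eq_xxxx algebra_simps)
  also have "\<dots> = \<tau>\<^sup>2 * real k ^ 4 / ((real k)\<^sup>2 + m)"
    by (rule mult_divide_mult_cancel_left) simp
  finally have exponent: "(2*?y)\<^sup>2 / (2 * real (card (block u) + card (block v) + 2 * card (block u \<inter> block v)))
      = \<tau>\<^sup>2 * real k ^ 4 / ((real k)\<^sup>2 + m)" .
  have "measure (gauss_matrix n) (heavy_event n ?y u \<inter> heavy_event n ?y v)
      \<le> exp (- (2*?y)\<^sup>2 / (2 * real (card (block u) + card (block v) + 2 * card (block u \<inter> block v))))"
    unfolding heavy_event_Int using \<tau>
      prob_gauss_sums_ge_le[OF n_pos_of_submatrices[OF u k] block_subset[OF u] block_subset[OF v]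
        block_nonempty[OF u k], of ?y]
    by simp
  then show ?thesis
    by (simp only: minus_divide_left[symmetric] exponent m_def)
qed

lemma cov_heavy_events_le:
  assumes u: "u \<in> submatrices n k" and v: "v \<in> submatrices n k" and k: "k \<ge> 1" and \<tau>: "\<tau> > 0"
  shows "measure (gauss_matrix n) (heavy_event n (\<tau> * (real k)\<^sup>2) u \<inter> heavy_event n (\<tau> * (real k)\<^sup>2) v)
      - measure (gauss_matrix n) (heavy_event n (\<tau> * (real k)\<^sup>2) u)
        * measure (gauss_matrix n) (heavy_event n (\<tau> * (real k)\<^sup>2) v)
      \<le> overlap_cov_bound \<tau> k (card (fst u \<inter> fst v)) (card (snd u \<inter> snd v))"
proof (cases "block u \<inter> block v = {}")
  case True
  then have "measure (gauss_matrix n) (heavy_event n (\<tau> * (real k)\<^sup>2) u \<inter> heavy_event n (\<tau> * (real k)\<^sup>2) v)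
      = measure (gauss_matrix n) (heavy_event n (\<tau> * (real k)\<^sup>2) u)
        * measure (gauss_matrix n) (heavy_event n (\<tau> * (real k)\<^sup>2) v)"
    using prob_gauss_sums_ge_disjoint[OF n_pos_of_submatrices[OF u k] block_subset[OF u] block_subset[OF v]]
    unfolding heavy_event_Int by (simp add: heavy_event_def)
  then show ?thesis by (simp add: overlap_cov_bound_nonneg)
next
  case False
  have "finite (block u \<inter> block v)" using block_subset[OF u] finite_subset by blast
  then have "card (fst u \<inter> fst v) \<noteq> 0" "card (snd u \<inter> snd v) \<noteq> 0"
    using False card_block_Int[of u v] by auto
  then have "measure (gauss_matrix n) (heavy_event n (\<tau> * (real k)\<^sup>2) u \<inter> heavy_event n (\<tau> * (real k)\<^sup>2) v)
      \<le> overlap_cov_bound \<tau> k (card (fst u \<inter> fst v)) (card (snd u \<inter> snd v))"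
    using prob_heavy_events_both_le[OF assms] by (simp add: overlap_cov_bound_def)
  moreover have "0 \<le> measure (gauss_matrix n) (heavy_event n (\<tau> * (real k)\<^sup>2) u)
      * measure (gauss_matrix n) (heavy_event n (\<tau> * (real k)\<^sup>2) v)"
    by simp
  ultimately show ?thesis by linarith
qed

section \<open>Counting overlapping blocks\<close>

lemma binomial_shift_le:
  fixes n k r :: nat
  assumes "r \<le> k"
  shows "(n choose (k - r)) * (n - k) ^ r \<le> (n choose k) * k ^ r"
  using assms
proof (induction r)
  case 0
  then show ?case by simp
next
  case (Suc r)
  define j where "j = k - r"
  have j: "j \<ge> 1" "j \<le> k" "k - Suc r = j - 1" using Suc.prems by (auto simp: j_def)
  have IH: "(n choose j) * (n - k) ^ r \<le> (n choose k) * k ^ r" using Suc by (simp add: j_def)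
  have absorb: "(n choose (j - 1)) * (n - (j - 1)) = (n choose j) * j"
  proof -
    have "j * (n choose j) = n * ((n - 1) choose (j - 1))"
      using j(1) by (simp add: times_binomial_minus1_eq)
    then show ?thesis using binomial_absorb_comp[of n "j - 1"] by (simp add: mult.commute)
  qed
  have "(n choose (k - Suc r)) * (n - k) ^ Suc r = (n choose (j - 1)) * (n - k) * (n - k) ^ r"
    by (simp add: j(3))
  also have "\<dots> \<le> (n choose (j - 1)) * (n - (j - 1)) * (n - k) ^ r"
    using j by (intro mult_right_mono mult_left_mono) auto
  also have "\<dots> = j * ((n choose j) * (n - k) ^ r)"
    by (simp only: absorb) (simp add: algebra_simps)
  also have "\<dots> \<le> k * ((n choose k) * k ^ r)"
    using mult_mono[OF j(2) IH] by simp
  finally show ?case by (simp add: mult.left_commute)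
qed

lemma binomial_ratio_le:
  fixes n k r :: nat
  assumes "r \<le> k" "2 * k \<le> n" "k \<ge> 1"
  shows "real ((n - k) choose (k - r)) / real (n choose k) \<le> (real k / real (n - k)) ^ r"
proof -
  have "real ((n - k) choose (k - r)) * real (n - k) ^ r \<le> real (n choose (k - r)) * real (n - k) ^ r"
    using binomial_right_mono[of "n - k" n "k - r"] by (intro mult_right_mono) auto
  also have "\<dots> \<le> real (n choose k) * real k ^ r"
  proof -
    have "real ((n choose (k - r)) * (n - k) ^ r) \<le> real ((n choose k) * k ^ r)"
      using binomial_shift_le[OF assms(1), of n] by (simp only: of_nat_le_iff)
    then show ?thesis by (simp only: of_nat_mult of_nat_power)
  qed
  finally show ?thesis
    using assms by (simp add: field_simps power_divide)
qed

lemma binomial_mult_binomial_le_pow: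
  assumes "r \<le> k" "c \<le> k"
  shows "real (k choose r) * real (k choose c) \<le> real k ^ (r + c)"
    and "real (k choose r) * real (k choose c) \<le> real k ^ (2 * k - (r + c))"
proof -
  have choose: "real (k choose j) \<le> real k ^ j" "real (k choose j) \<le> real k ^ (k - j)"
    if "j \<le> k" for j
    using binomial_le_pow[OF that] binomial_le_pow[of "k - j" k] binomial_symmetric[OF that]
    by (simp_all flip: of_nat_power)
  show "real (k choose r) * real (k choose c) \<le> real k ^ (r + c)"
    using choose(1) assms by (auto simp: power_add intro!: mult_mono)
  have "real k ^ (2 * k - (r + c)) = real k ^ (k - r) * real k ^ (k - c)"
    using assms by (simp add: mult_2 flip: power_add)
  then show "real (k choose r) * real (k choose c) \<le> real k ^ (2 * k - (r + c))"
    using choose(2) assms by (auto intro!: mult_mono)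
qed

lemma sum_comp_eq_sum_card_fibres:
  fixes \<phi> :: "'b \<Rightarrow> real"
  assumes "finite A" "finite T" "h ` A \<subseteq> T"
  shows "(\<Sum>x\<in>A. \<phi> (h x)) = (\<Sum>t\<in>T. real (card {x\<in>A. h x = t}) * \<phi> t)"
proof -
  have "(\<Sum>x\<in>A. \<phi> (h x)) = (\<Sum>t\<in>T. \<Sum>x\<in>{x. x \<in> A \<and> h x = t}. \<phi> (h x))"
    by (rule sum.group[OF assms, symmetric])
  also have "\<dots> = (\<Sum>t\<in>T. \<Sum>x\<in>{x. x \<in> A \<and> h x = t}. \<phi> t)"
    by (intro sum.cong) auto
  finally show ?thesis by simp
qed

lemma card_k_subsets_overlap_le:
  assumes R: "R \<in> k_subsets n k"
  shows "card {R'\<in>k_subsets n k. card (R \<inter> R') = r} \<le> (k choose r) * ((n - k) choose (k - r))"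
proof -
  have Rs: "R \<subseteq> {..<n}" and cR: "card R = k" using R by (auto simp: k_subsets_def)
  have fR: "finite R" using Rs finite_subset by blast
  let ?A = "{R'\<in>k_subsets n k. card (R \<inter> R') = r}"
  let ?B = "{X. X \<subseteq> R \<and> card X = r} \<times> {Y. Y \<subseteq> {..<n} - R \<and> card Y = k - r}"
  \<comment> \<open>a set is determined by its parts inside and outside \<open>R\<close>\<close>
  define f where "f R' = (R \<inter> R', R' - R)" for R'
  have "inj_on f ?A"
    by (rule inj_onI) (auto simp: f_def set_eq_iff)
  moreover have "f ` ?A \<subseteq> ?B"
  proof
    fix z assume "z \<in> f ` ?A"
    then obtain X where X: "X \<in> ?A" "z = f X" by blast
    then have Xs: "X \<subseteq> {..<n}" "card X = k" "card (R \<inter> X) = r" by (auto simp: k_subsets_def)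
    then have "card (X - R) = k - r"
      using finite_subset[OF Xs(1)] by (simp add: card_Diff_subset_Int Int_commute)
    then show "z \<in> ?B" using X Xs by (auto simp: f_def)
  qed
  moreover have "finite ?B" using fR by (auto intro: finite_subset[of _ "Pow {..<n}"])
  ultimately have "card ?A \<le> card ?B" by (rule card_inj_on_le)
  also have "card ?B = (k choose r) * ((n - k) choose (k - r))"
    using n_subsets[OF fR, of r] n_subsets[of "{..<n} - R" "k - r"] card_Diff_subset[OF fR Rs] cR
    by (simp add: card_cartesian_product)
  finally show ?thesis .
qed

lemma sum_over_overlaps_le:
  fixes g :: "nat \<Rightarrow> nat \<Rightarrow> real"
  assumes u: "u \<in> submatrices n k" and g: "\<And>r c. g r c \<ge> 0"
  shows "(\<Sum>v\<in>submatrices n k. g (card (fst u \<inter> fst v)) (card (snd u \<inter> snd v)))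
    \<le> (\<Sum>r\<le>k. \<Sum>c\<le>k. real ((k choose r) * ((n - k) choose (k - r)))
                         * real ((k choose c) * ((n - k) choose (k - c))) * g r c)"
proof -
  obtain R C where uRC: "u = (R, C)" and R: "R \<in> k_subsets n k" and C: "C \<in> k_subsets n k"
    using u by (auto simp: submatrices_def)
  let ?a = "\<lambda>r. real ((k choose r) * ((n - k) choose (k - r)))"
  let ?cR = "\<lambda>r. real (card {R'\<in>k_subsets n k. card (R \<inter> R') = r})"
  let ?cC = "\<lambda>c. real (card {C'\<in>k_subsets n k. card (C \<inter> C') = c})"
  have imR: "(\<lambda>R'. card (R \<inter> R')) ` k_subsets n k \<subseteq> {..k}"
    and imC: "(\<lambda>C'. card (C \<inter> C')) ` k_subsets n k \<subseteq> {..k}"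
    using card_Int_k_subset_le[OF R] card_Int_k_subset_le[OF C] by auto
  have "(\<Sum>v\<in>submatrices n k. g (card (fst u \<inter> fst v)) (card (snd u \<inter> snd v)))
      = (\<Sum>R'\<in>k_subsets n k. \<Sum>C'\<in>k_subsets n k. g (card (R \<inter> R')) (card (C \<inter> C')))"
    unfolding submatrices_def uRC by (simp add: sum.cartesian_product split_beta)
  also have "\<dots> = (\<Sum>R'\<in>k_subsets n k. \<Sum>c\<le>k. ?cC c * g (card (R \<inter> R')) c)"
    by (intro sum.cong refl sum_comp_eq_sum_card_fibres[OF finite_k_subsets _ imC]) simp
  also have "\<dots> = (\<Sum>c\<le>k. ?cC c * (\<Sum>R'\<in>k_subsets n k. g (card (R \<inter> R')) c))"
    by (subst sum.swap) (simp add: sum_distrib_left)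
  also have "\<dots> = (\<Sum>c\<le>k. ?cC c * (\<Sum>r\<le>k. ?cR r * g r c))"
    by (intro sum.cong refl arg_cong[where f="\<lambda>x. _ * x"]
        sum_comp_eq_sum_card_fibres[OF finite_k_subsets _ imR]) simp
  also have "\<dots> \<le> (\<Sum>c\<le>k. ?a c * (\<Sum>r\<le>k. ?a r * g r c))"
  proof (rule sum_mono)
    fix c
    have "?cR r * g r c \<le> ?a r * g r c" for r
      using card_k_subsets_overlap_le[OF R, of r] g[of r c]
      by (intro mult_right_mono) (simp_all only: of_nat_le_iff)
    then have "(\<Sum>r\<le>k. ?cR r * g r c) \<le> (\<Sum>r\<le>k. ?a r * g r c)"
      by (rule sum_mono)
    moreover have "?cC c \<le> ?a c"
      using card_k_subsets_overlap_le[OF C, of c] by (simp only: of_nat_le_iff)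
    ultimately show "?cC c * (\<Sum>r\<le>k. ?cR r * g r c) \<le> ?a c * (\<Sum>r\<le>k. ?a r * g r c)"
      using g by (intro mult_mono sum_nonneg) auto
  qed
  also have "\<dots> = (\<Sum>r\<le>k. \<Sum>c\<le>k. ?a r * ?a c * g r c)"
    by (subst sum.swap) (simp add: sum_distrib_left mult_ac)
  finally show ?thesis .
qed

section \<open>The analytic estimate for one overlap class\<close>

definition overlap_rate :: "real \<Rightarrow> real \<Rightarrow> real \<Rightarrow> real" where
  "overlap_rate t K S = t\<^sup>2 * K / 4 * S * (2*K - S)\<^sup>2 / (4*K\<^sup>2 + S\<^sup>2)"

lemma overlap_exponent_le:
  fixes t K S m :: real
  assumes K: "K > 0" and m: "0 \<le> m" "m \<le> S\<^sup>2 / 4"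
  shows "- (t\<^sup>2 * K ^ 4) / (K\<^sup>2 + m) + t\<^sup>2 * K\<^sup>2 - t\<^sup>2 * K / 4 * S \<le> - overlap_rate t K S"
proof -
  have pos: "K\<^sup>2 + m > 0" "4*K\<^sup>2 + S\<^sup>2 > 0" using K m by (auto intro: add_pos_nonneg)
  have "- (t\<^sup>2 * K ^ 4) / (K\<^sup>2 + m) + t\<^sup>2 * K\<^sup>2 = t\<^sup>2 * K\<^sup>2 * (m / (K\<^sup>2 + m))"
    using pos by (simp add: field_simps power2_eq_square power4_eq_xxxx)
  also have "\<dots> \<le> t\<^sup>2 * K\<^sup>2 * ((S\<^sup>2 / 4) / (K\<^sup>2 + S\<^sup>2 / 4))"
  proof -
    have "x / (a + x) \<le> y / (a + y)" if "a > 0" "0 \<le> x" "x \<le> y" for a x y :: real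
      using that by (simp add: field_simps mult_right_mono)
    from this[of "K\<^sup>2" m "S\<^sup>2 / 4"] show ?thesis
      using K m by (intro mult_left_mono) auto
  qed
  also have "\<dots> = t\<^sup>2 * K / 4 * S - overlap_rate t K S"
    using pos by (simp add: overlap_rate_def field_simps power2_eq_square)
  finally show ?thesis by simp
qed

lemma small_overlap_term_le:
  fixes t c0 B :: real and k s :: nat
  assumes t: "t > 0" and s: "2 \<le> s" "s \<le> k" and B: "0 \<le> B" "B \<le> real k ^ s" and c0: "c0 \<ge> 0"
    and E2: "4 * c0 * t\<^sup>2 * real k ^ 8 \<le> exp (t\<^sup>2 * real k / 10)"
    and E3: "real k \<le> exp (t\<^sup>2 * real k / 20)"
  shows "B * (c0 * t\<^sup>2 * (real k)\<^sup>2) * (1/4) ^ s * exp (- overlap_rate t k s) \<le> 1 / (4 * real k ^ 4)"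
proof -
  define K where "K = real k"
  have K: "K \<ge> 1" using s by (simp add: K_def)
  \<comment> \<open>for \<open>s \<le> k\<close> the rate is at least \<open>t\<^sup>2ks/20\<close>, and each factor \<open>k exp (-t\<^sup>2k/20)\<close> is at most 1\<close>
  have rate: "overlap_rate t K s \<ge> real s * (t\<^sup>2 * K / 20)"
  proof -
    have "(2*K - s)\<^sup>2 \<ge> K\<^sup>2" "4*K\<^sup>2 + (real s)\<^sup>2 \<le> 5 * K\<^sup>2"
      using s K by (auto simp: K_def intro!: power_mono)
    moreover have "4*K\<^sup>2 + (real s)\<^sup>2 > 0" using K by (auto intro: add_pos_nonneg)
    ultimately have "(2*K - s)\<^sup>2 / (4*K\<^sup>2 + (real s)\<^sup>2) \<ge> 1/5"
      by (simp add: le_divide_eq)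
    moreover have "t\<^sup>2 * K / 4 * s \<ge> 0" using K by simp
    ultimately have "t\<^sup>2 * K / 4 * s * ((2*K - s)\<^sup>2 / (4*K\<^sup>2 + (real s)\<^sup>2)) \<ge> t\<^sup>2 * K / 4 * s * (1/5)"
      by (intro mult_left_mono)
    then show ?thesis by (simp add: overlap_rate_def mult_ac)
  qed
  have base: "K * exp (- (t\<^sup>2 * K / 20)) \<le> 1"
    using E3 by (simp add: K_def exp_minus field_simps)
  have "B * (c0 * t\<^sup>2 * K\<^sup>2) * (1/4) ^ s * exp (- overlap_rate t K s)
      \<le> K ^ s * (c0 * t\<^sup>2 * K\<^sup>2) * 1 * exp (- (real s * (t\<^sup>2 * K / 20)))"
    using B rate c0 K by (intro mult_mono) (auto simp: K_def power_le_one)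
  also have "\<dots> = (c0 * t\<^sup>2 * K\<^sup>2) * (K * exp (- (t\<^sup>2 * K / 20))) ^ s"
    by (simp add: power_mult_distrib mult_ac flip: exp_of_nat_mult)
  also have "\<dots> \<le> (c0 * t\<^sup>2 * K\<^sup>2) * (K * exp (- (t\<^sup>2 * K / 20))) ^ 2"
    using base K s c0 by (intro mult_left_mono power_decreasing) auto
  also have "\<dots> = (4 * c0 * t\<^sup>2 * K ^ 8) * exp (- (t\<^sup>2 * K / 10)) / (4 * K ^ 4)"
    using K by (simp add: field_simps power2_eq_square eval_nat_numeral flip: exp_add)
  also have "\<dots> \<le> exp (t\<^sup>2 * K / 10) * exp (- (t\<^sup>2 * K / 10)) / (4 * K ^ 4)"
    using E2 K by (intro divide_right_mono mult_right_mono) (auto simp: K_def)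
  finally show ?thesis by (simp add: K_def flip: exp_add)
qed

lemma large_overlap_term_le:
  fixes t c0 B :: real and k s :: nat
  assumes t: "t > 0" and s: "k < s" "s \<le> 2 * k" and B: "0 \<le> B" "B \<le> real k ^ (2 * k - s)"
    and c0: "c0 \<ge> 0"
    and E4: "4 * c0 * t\<^sup>2 * real k ^ 6 * exp (5 * (ln (real k))\<^sup>2 / t\<^sup>2) \<le> 4 ^ k"
  shows "B * (c0 * t\<^sup>2 * (real k)\<^sup>2) * (1/4) ^ s * exp (- overlap_rate t k s) \<le> 1 / (4 * real k ^ 4)"
proof -
  define K where "K = real k"
  define d where "d = 2 * k - s"
  have K: "K \<ge> 1" using s by (simp add: K_def)
  have d: "real d = 2 * K - s" using s by (simp add: d_def K_def of_nat_diff)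
  \<comment> \<open>for \<open>s > k\<close> the rate is at least \<open>t\<^sup>2d\<^sup>2/20\<close> with \<open>d = 2k - s\<close>\<close>
  have rate: "overlap_rate t K s \<ge> t\<^sup>2 * (real d)\<^sup>2 / 20"
  proof -
    have "(s - K) * (4*K - s) \<ge> 0" using s by (intro mult_nonneg_nonneg) (auto simp: K_def)
    then have "t\<^sup>2 * (4*K\<^sup>2 + (real s)\<^sup>2) \<le> t\<^sup>2 * (5 * K * s)"
      by (intro mult_left_mono) (auto simp: algebra_simps power2_eq_square)
    moreover have "4*K\<^sup>2 + (real s)\<^sup>2 > 0" using K by (auto intro: add_pos_nonneg)
    ultimately have "t\<^sup>2 * K / 4 * s / (4*K\<^sup>2 + (real s)\<^sup>2) \<ge> t\<^sup>2 / 20"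
      by (simp add: field_simps)
    then have "t\<^sup>2 * K / 4 * s / (4*K\<^sup>2 + (real s)\<^sup>2) * (2*K - s)\<^sup>2 \<ge> t\<^sup>2 / 20 * (2*K - s)\<^sup>2"
      by (intro mult_right_mono) auto
    then show ?thesis unfolding overlap_rate_def d by (simp add: field_simps)
  qed
  have quadratic: "real d * ln K - t\<^sup>2 * (real d)\<^sup>2 / 20 \<le> 5 * (ln K)\<^sup>2 / t\<^sup>2"
  proof -
    have "0 \<le> (t\<^sup>2 * real d - 10 * ln K)\<^sup>2" by simp
    then show ?thesis using t by (simp add: field_simps power2_eq_square power4_eq_xxxx)
  qed
  have "(1/4::real) ^ s \<le> (1/4) ^ k" using s by (intro power_decreasing) auto
  then have "B * (c0 * t\<^sup>2 * K\<^sup>2) * (1/4) ^ s * exp (- overlap_rate t K s)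
      \<le> K ^ d * (c0 * t\<^sup>2 * K\<^sup>2) * (1/4) ^ k * exp (- (t\<^sup>2 * (real d)\<^sup>2 / 20))"
    using B rate c0 K by (intro mult_mono) (auto simp: K_def d_def)
  also have "\<dots> = (c0 * t\<^sup>2 * K\<^sup>2) * (1/4) ^ k * exp (real d * ln K - t\<^sup>2 * (real d)\<^sup>2 / 20)"
  proof -
    have "K ^ d = exp (real d * ln K)" using K by (simp add: exp_of_nat_mult)
    then have "K ^ d * exp (- (t\<^sup>2 * (real d)\<^sup>2 / 20)) = exp (real d * ln K - t\<^sup>2 * (real d)\<^sup>2 / 20)"
      by (simp flip: exp_add)
    then show ?thesis by (simp add: mult_ac)
  qed
  also have "\<dots> \<le> (c0 * t\<^sup>2 * K\<^sup>2) * (1/4) ^ k * exp (5 * (ln K)\<^sup>2 / t\<^sup>2)"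
    using quadratic c0 by (intro mult_left_mono) auto
  also have "\<dots> = (4 * c0 * t\<^sup>2 * K ^ 6 * exp (5 * (ln K)\<^sup>2 / t\<^sup>2)) * (1/4) ^ k / (4 * K ^ 4)"
    using K by (simp add: field_simps power2_eq_square power4_eq_xxxx eval_nat_numeral)
  also have "\<dots> \<le> 4 ^ k * (1/4) ^ k / (4 * K ^ 4)"
    using E4 K by (intro divide_right_mono mult_right_mono) (auto simp: K_def)
  finally show ?thesis by (simp add: K_def power_one_over)
qed

lemma overlap_term_le:
  fixes t q c0 :: real and k r c :: nat
  assumes t: "t > 0" and r: "1 \<le> r" "r \<le> k" and c: "1 \<le> c" "c \<le> k"
    and q: "0 \<le> q" "q \<le> exp (- (t\<^sup>2 * real k / 4)) / 4" and c0: "c0 \<ge> 0"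
    and E2: "4 * c0 * t\<^sup>2 * real k ^ 8 \<le> exp (t\<^sup>2 * real k / 10)"
    and E3: "real k \<le> exp (t\<^sup>2 * real k / 20)"
    and E4: "4 * c0 * t\<^sup>2 * real k ^ 6 * exp (5 * (ln (real k))\<^sup>2 / t\<^sup>2) \<le> 4 ^ k"
  shows "real (k choose r) * real (k choose c) * q ^ (r + c)
           * exp (- (t\<^sup>2 * real k ^ 4) / ((real k)\<^sup>2 + real r * real c))
           * (c0 * t\<^sup>2 * (real k)\<^sup>2 * exp (t\<^sup>2 * (real k)\<^sup>2)) \<le> 1 / (4 * real k ^ 4)"
proof -
  define K where "K = real k"
  define s where "s = r + c"
  define B where "B = real (k choose r) * real (k choose c)"
  have K: "K \<ge> 1" using r by (simp add: K_def)
  have B: "0 \<le> B" "B \<le> K ^ s" "B \<le> K ^ (2 * k - s)"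
    using binomial_mult_binomial_le_pow[OF r(2) c(2)] by (simp_all add: B_def K_def s_def)
  have "q ^ s \<le> (exp (- (t\<^sup>2 * K / 4)) / 4) ^ s"
    using q by (intro power_mono) (auto simp: K_def)
  also have "\<dots> = (1/4) ^ s * exp (- (t\<^sup>2 * K / 4 * s))"
    by (simp add: power_divide exp_of_nat_mult[symmetric] mult.commute)
  finally have qs: "q ^ s \<le> (1/4) ^ s * exp (- (t\<^sup>2 * K / 4 * s))" .
  have "real r * real c \<le> (real s)\<^sup>2 / 4"
    using sum_squares_ge_zero[of "real r - real c" 0]
    by (simp add: s_def power2_eq_square algebra_simps)
  then have exponent: "- (t\<^sup>2 * K ^ 4) / (K\<^sup>2 + real r * real c) + t\<^sup>2 * K\<^sup>2 - t\<^sup>2 * K / 4 * s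
      \<le> - overlap_rate t K s"
    using K by (intro overlap_exponent_le) auto
  have "B * q ^ s * exp (- (t\<^sup>2 * K ^ 4) / (K\<^sup>2 + real r * real c)) * (c0 * t\<^sup>2 * K\<^sup>2 * exp (t\<^sup>2 * K\<^sup>2))
      \<le> B * ((1/4) ^ s * exp (- (t\<^sup>2 * K / 4 * s))) * exp (- (t\<^sup>2 * K ^ 4) / (K\<^sup>2 + real r * real c))
         * (c0 * t\<^sup>2 * K\<^sup>2 * exp (t\<^sup>2 * K\<^sup>2))"
    using qs B c0 by (intro mult_right_mono mult_left_mono) auto
  also have "\<dots> = B * (c0 * t\<^sup>2 * K\<^sup>2) * (1/4) ^ s
      * exp (- (t\<^sup>2 * K ^ 4) / (K\<^sup>2 + real r * real c) + t\<^sup>2 * K\<^sup>2 - t\<^sup>2 * K / 4 * s)"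
  proof -
    have "exp (X + Y - Z) = exp (- Z) * exp X * exp Y" for X Y Z :: real
      by (simp add: exp_add exp_diff exp_minus field_simps)
    then show ?thesis by (simp only: mult_ac)
  qed
  also have "\<dots> \<le> B * (c0 * t\<^sup>2 * K\<^sup>2) * (1/4) ^ s * exp (- overlap_rate t K s)"
    using exponent B c0 by (intro mult_left_mono) auto
  also have "\<dots> \<le> 1 / (4 * K ^ 4)"
  proof (cases "s \<le> k")
    case True
    have "2 \<le> s" using r c by (simp add: s_def)
    then show ?thesis
      using small_overlap_term_le[OF t _ True B(1) _ c0 E2 E3] B(2) by (simp add: K_def)
  next
    case False
    then have "k < s" "s \<le> 2 * k" using r c by (auto simp: s_def)
    then show ?thesis
      using large_overlap_term_le[OF t _ _ B(1) _ c0 E4] B(3) by (simp add: K_def)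
  qed
  finally show ?thesis by (simp add: K_def B_def s_def)
qed

section \<open>The second moment bound\<close>

text \<open>The constant \<open>2\<pi>e\<^sup>3\<close> is the one produced by squaring the lower bound of
  \<open>prob_heavy_event_ge\<close>.\<close>

definition sufficiently_large :: "real \<Rightarrow> nat \<Rightarrow> bool" where
  "sufficiently_large \<tau> k \<longleftrightarrow> 2 \<le> k \<and> 1 \<le> \<tau> * real k
     \<and> 4 * (2 * pi * exp 3) * \<tau>\<^sup>2 * real k ^ 8 \<le> exp (\<tau>\<^sup>2 * real k / 10)
     \<and> real k \<le> exp (\<tau>\<^sup>2 * real k / 20)
     \<and> 4 * (2 * pi * exp 3) * \<tau>\<^sup>2 * real k ^ 6 * exp (5 * (ln (real k))\<^sup>2 / \<tau>\<^sup>2) \<le> 4 ^ k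
     \<and> 1 + 4 / \<tau>\<^sup>2 * \<bar>ln (4 / \<tau>\<^sup>2 * ln 2)\<bar> < real k"

lemma eventually_sufficiently_large:
  assumes "\<tau> > 0"
  shows "eventually (sufficiently_large \<tau>) sequentially"
proof -
  have "eventually (\<lambda>k::nat. 2 \<le> k) sequentially" by (rule eventually_ge_at_top)
  moreover have "eventually (\<lambda>k::nat. 1 \<le> \<tau> * real k) sequentially"
    using assms by real_asymp
  moreover have "eventually (\<lambda>k::nat. 4 * (2 * pi * exp 3) * \<tau>\<^sup>2 * real k ^ 8
      \<le> exp (\<tau>\<^sup>2 * real k / 10)) sequentially"
    using assms by real_asymp
  moreover have "eventually (\<lambda>k::nat. real k \<le> exp (\<tau>\<^sup>2 * real k / 20)) sequentially"
    using assms by real_asymp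
  moreover have "eventually (\<lambda>k::nat. 4 * (2 * pi * exp 3) * \<tau>\<^sup>2 * real k ^ 6
      * exp (5 * (ln (real k))\<^sup>2 / \<tau>\<^sup>2) \<le> 4 ^ k) sequentially"
    using assms by real_asymp
  moreover have "eventually (\<lambda>k::nat. 1 + 4 / \<tau>\<^sup>2 * \<bar>ln (4 / \<tau>\<^sup>2 * ln 2)\<bar> < real k) sequentially"
    by real_asymp
  ultimately show ?thesis
    unfolding sufficiently_large_def by eventually_elim blast
qed

lemma n_large_of_k_le_threshold:
  fixes \<tau> :: real and k n :: nat
  assumes \<tau>: "\<tau> > 0" and k: "sufficiently_large \<tau> k" and kn: "k \<le> n"
    and threshold: "real k \<le> 4 / \<tau>\<^sup>2 * ln (real n) - 4 / \<tau>\<^sup>2 * ln (4 / \<tau>\<^sup>2 * ln (real n))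
                             - 12 * ln 2 / \<tau>\<^sup>2"
  shows "8 * real k * exp (\<tau>\<^sup>2 * real k / 4) \<le> real n"
proof -
  define a where "a = 4 / \<tau>\<^sup>2"
  define L where "L = ln (real n)"
  have a: "a > 0" using \<tau> by (simp add: a_def)
  have k2: "2 \<le> k" and k_big: "1 + a * \<bar>ln (a * ln 2)\<bar> < real k"
    using k by (auto simp: sufficiently_large_def a_def)
  have n: "real n \<ge> 2" using k2 kn by simp
  then have L: "L \<ge> ln 2" by (simp add: L_def)
  have "ln (2::real) > 0" by simp
  then have "L > 0" using L by linarith
  have "0 \<le> 3 * a * ln 2" using a \<open>ln 2 > 0\<close> by simp
  have h: "real k \<le> a * L - a * ln (a * L) - 3 * a * ln 2"
    using threshold by (simp add: a_def L_def)
  \<comment> \<open>\<open>aL < 1\<close> would force \<open>k < 1 + a |ln (a ln 2)|\<close>\<close>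
  have aL: "a * L \<ge> 1"
  proof (rule ccontr)
    assume "\<not> a * L \<ge> 1"
    moreover have "ln (a * ln 2) \<le> ln (a * L)"
      using L a \<open>ln 2 > 0\<close> \<open>L > 0\<close> by (subst ln_le_cancel_iff) auto
    then have "a * (- ln (a * L)) \<le> a * \<bar>ln (a * ln 2)\<bar>" using a by (intro mult_left_mono) auto
    ultimately have "real k < 1 + a * \<bar>ln (a * ln 2)\<bar>"
      using h \<open>0 \<le> 3 * a * ln 2\<close> by simp
    then show False using k_big by simp
  qed
  then have "0 \<le> a * ln (a * L)" using a by simp
  then have "real k \<le> a * L" using h \<open>0 \<le> 3 * a * ln 2\<close> by linarith
  \<comment> \<open>so the threshold stays valid with \<open>ln (aL)\<close> replaced by \<open>ln k\<close>\<close>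
  then have "a * ln (real k) \<le> a * ln (a * L)" using a k2 by (intro mult_left_mono) auto
  then have "real k \<le> a * L - a * ln (real k) - 3 * a * ln 2"
    using h by linarith
  then have "real k / a + ln (real k) + 3 * ln 2 \<le> L"
    using a by (simp add: field_simps)
  then have "exp (real k / a + ln (real k) + 3 * ln 2) \<le> exp L"
    by simp
  also have "exp L = real n" using n by (simp add: L_def)
  finally have "exp (real k / a + ln (real k) + 3 * ln 2) \<le> real n" .
  moreover have "exp (3 * ln (2::real)) = 8"
    using exp_of_nat_mult[of 3 "ln (2::real)"] by simp
  ultimately show ?thesis
    using k2 by (simp add: exp_add a_def mult_ac)
qed

lemma overlap_class_term_le:
  fixes \<tau> :: real and k n r c :: nat
  assumes \<tau>: "\<tau> > 0" and k: "sufficiently_large \<tau> k" and rc: "r \<le> k" "c \<le> k"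
    and n: "8 * real k * exp (\<tau>\<^sup>2 * real k / 4) \<le> real n"
  shows "real ((k choose r) * ((n - k) choose (k - r))) / real (n choose k)
       * (real ((k choose c) * ((n - k) choose (k - c))) / real (n choose k))
       * overlap_cov_bound \<tau> k r c * (2 * pi * exp 3 * \<tau>\<^sup>2 * (real k)\<^sup>2 * exp (\<tau>\<^sup>2 * (real k)\<^sup>2))
       \<le> 1 / (4 * real k ^ 4)"
proof (cases "r = 0 \<or> c = 0")
  case True
  then show ?thesis by (auto simp: overlap_cov_bound_def)
next
  case False
  define q where "q = real k / real (n - k)"
  have k1: "k \<ge> 1" using k by (simp add: sufficiently_large_def)
  have "real k \<le> real k * exp (\<tau>\<^sup>2 * real k / 4)"
    using mult_left_mono[of 1 "exp (\<tau>\<^sup>2 * real k / 4)" "real k"] by simp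
  then have n_k: "4 * real k * exp (\<tau>\<^sup>2 * real k / 4) \<le> real (n - k)" "2 * k \<le> n"
    using n by (simp_all add: of_nat_diff)
  have q: "0 \<le> q" "q \<le> exp (- (\<tau>\<^sup>2 * real k / 4)) / 4"
  proof -
    show "0 \<le> q" by (simp add: q_def)
    have "q \<le> real k / (4 * real k * exp (\<tau>\<^sup>2 * real k / 4))"
      unfolding q_def using n_k k1 by (intro divide_left_mono) auto
    then show "q \<le> exp (- (\<tau>\<^sup>2 * real k / 4)) / 4"
      using k1 by (simp add: exp_minus field_simps)
  qed
  have ratio: "real ((k choose j) * ((n - k) choose (k - j))) / real (n choose k) \<le> real (k choose j) * q ^ j"
    if "j \<le> k" for j
    using mult_left_mono[OF binomial_ratio_le[OF that n_k(2) k1], of "real (k choose j)"]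
    by (simp add: q_def)
  have "real ((k choose r) * ((n - k) choose (k - r))) / real (n choose k)
       * (real ((k choose c) * ((n - k) choose (k - c))) / real (n choose k))
       * overlap_cov_bound \<tau> k r c * (2 * pi * exp 3 * \<tau>\<^sup>2 * (real k)\<^sup>2 * exp (\<tau>\<^sup>2 * (real k)\<^sup>2))
     \<le> (real (k choose r) * q ^ r) * (real (k choose c) * q ^ c)
       * exp (- (\<tau>\<^sup>2 * real k ^ 4) / ((real k)\<^sup>2 + real r * real c))
       * (2 * pi * exp 3 * \<tau>\<^sup>2 * (real k)\<^sup>2 * exp (\<tau>\<^sup>2 * (real k)\<^sup>2))"
    unfolding overlap_cov_bound_def using ratio[OF rc(1)] ratio[OF rc(2)] q False
    by (intro mult_right_mono mult_mono) (auto intro!: divide_nonneg_nonneg)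
  also have "\<dots> = real (k choose r) * real (k choose c) * q ^ (r + c)
       * exp (- (\<tau>\<^sup>2 * real k ^ 4) / ((real k)\<^sup>2 + real r * real c))
       * (2 * pi * exp 3 * \<tau>\<^sup>2 * (real k)\<^sup>2 * exp (\<tau>\<^sup>2 * (real k)\<^sup>2))"
    by (simp add: power_add mult_ac)
  also have "\<dots> \<le> 1 / (4 * real k ^ 4)"
    using False k \<tau> q rc by (intro overlap_term_le) (auto simp: sufficiently_large_def)
  finally show ?thesis .
qed

lemma E_Gamma_ge:
  assumes \<tau>: "\<tau> > 0" "1 \<le> \<tau> * real k" and k: "k \<ge> 1"
  shows "E_Gamma k \<tau> n \<ge> real (n choose k) ^ 2
           * (exp (- (\<tau>\<^sup>2 * (real k)\<^sup>2 / 2)) / (\<tau> * real k * sqrt (2 * pi) * exp (3/2)))"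
proof -
  have "real (card (submatrices n k)) = real (n choose k) ^ 2"
    by (simp add: submatrices_def card_cartesian_product card_k_subsets power2_eq_square)
  moreover have "(\<Sum>u\<in>submatrices n k. exp (- (\<tau>\<^sup>2 * (real k)\<^sup>2 / 2)) / (\<tau> * real k * sqrt (2 * pi) * exp (3/2)))
      \<le> E_Gamma k \<tau> n"
    unfolding E_Gamma_eq_sum_prob[OF k] using prob_heavy_event_ge[OF _ k \<tau>] by (rule sum_mono)
  ultimately show ?thesis by simp
qed

lemma Var_Gamma_le:
  assumes \<tau>: "\<tau> > 0" and k: "k \<ge> 1"
  shows "Var_Gamma k \<tau> n \<le> real (n choose k) ^ 2 * (\<Sum>r\<le>k. \<Sum>c\<le>k.
           real ((k choose r) * ((n - k) choose (k - r))) * real ((k choose c) * ((n - k) choose (k - c)))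
           * overlap_cov_bound \<tau> k r c)"
proof -
  have "Var_Gamma k \<tau> n \<le> (\<Sum>u\<in>submatrices n k. \<Sum>v\<in>submatrices n k.
      overlap_cov_bound \<tau> k (card (fst u \<inter> fst v)) (card (snd u \<inter> snd v)))"
    unfolding Var_Gamma_eq_sum_cov[OF k] by (intro sum_mono cov_heavy_events_le[OF _ _ k \<tau>])
  also have "\<dots> \<le> (\<Sum>u\<in>submatrices n k. \<Sum>r\<le>k. \<Sum>c\<le>k.
      real ((k choose r) * ((n - k) choose (k - r))) * real ((k choose c) * ((n - k) choose (k - c)))
      * overlap_cov_bound \<tau> k r c)"
    by (intro sum_mono sum_over_overlaps_le overlap_cov_bound_nonneg)
  finally show ?thesis
    by (simp add: submatrices_def card_cartesian_product card_k_subsets power2_eq_square)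
qed

lemma Var_Gamma_div_E_Gamma_sq_le:
  assumes \<tau>: "\<tau> > 0" and k: "sufficiently_large \<tau> k" and kn: "k \<le> n"
    and n: "8 * real k * exp (\<tau>\<^sup>2 * real k / 4) \<le> real n"
  shows "Var_Gamma k \<tau> n / (E_Gamma k \<tau> n)\<^sup>2 \<le> 1 / (real k)\<^sup>2"
proof -
  define N where "N = real (n choose k)"
  define p where "p = exp (- (\<tau>\<^sup>2 * (real k)\<^sup>2 / 2)) / (\<tau> * real k * sqrt (2 * pi) * exp (3/2))"
  define a where "a r = real ((k choose r) * ((n - k) choose (k - r))) / N" for r
  have k1: "k \<ge> 1" and \<tau>k: "1 \<le> \<tau> * real k" using k by (auto simp: sufficiently_large_def)
  have N: "N \<ge> 1" using kn by (simp add: N_def Suc_le_eq)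
  have p: "p > 0" using \<tau> k1 by (simp add: p_def)
  have inverse_p_sq: "1 / p\<^sup>2 = 2 * pi * exp 3 * \<tau>\<^sup>2 * (real k)\<^sup>2 * exp (\<tau>\<^sup>2 * (real k)\<^sup>2)"
  proof -
    have "(exp (- (\<tau>\<^sup>2 * (real k)\<^sup>2 / 2)))\<^sup>2 = exp (- (\<tau>\<^sup>2 * (real k)\<^sup>2))"
      "(exp (3/2::real))\<^sup>2 = exp 3"
      by (simp_all add: power2_eq_square flip: exp_add)
    then show ?thesis
      by (simp add: p_def power_divide power_mult_distrib exp_minus field_simps)
  qed
  have E: "E_Gamma k \<tau> n \<ge> N\<^sup>2 * p"
    using E_Gamma_ge[OF \<tau> \<tau>k k1] by (simp add: N_def p_def)
  have "Var_Gamma k \<tau> n \<le> N\<^sup>2 * (\<Sum>r\<le>k. \<Sum>c\<le>k. (N * a r) * (N * a c) * overlap_cov_bound \<tau> k r c)"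
  proof -
    have "N * a r = real ((k choose r) * ((n - k) choose (k - r)))" for r
      using N by (simp add: a_def)
    then show ?thesis using Var_Gamma_le[OF \<tau> k1, of n] by (simp only: N_def)
  qed
  also have "\<dots> = (N\<^sup>2 * p)\<^sup>2 * (\<Sum>r\<le>k. \<Sum>c\<le>k. a r * a c * overlap_cov_bound \<tau> k r c * (1 / p\<^sup>2))"
    using p by (simp add: sum_distrib_left sum_distrib_right power2_eq_square field_simps)
  also have "\<dots> \<le> (N\<^sup>2 * p)\<^sup>2 * (\<Sum>r\<le>k. \<Sum>c\<le>k. 1 / (4 * real k ^ 4))"
    unfolding inverse_p_sq a_def N_def using overlap_class_term_le[OF \<tau> k _ _ n]
    by (intro mult_left_mono sum_mono) auto
  also have "\<dots> \<le> (E_Gamma k \<tau> n)\<^sup>2 * (\<Sum>r\<le>k. \<Sum>c\<le>k. 1 / (4 * real k ^ 4))"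
    using E N p by (intro mult_right_mono power_mono) auto
  also have "\<dots> = (E_Gamma k \<tau> n)\<^sup>2 * ((real k + 1)\<^sup>2 / (4 * real k ^ 4))"
    by (simp add: power2_eq_square add.commute)
  finally have V: "Var_Gamma k \<tau> n \<le> (E_Gamma k \<tau> n)\<^sup>2 * ((real k + 1)\<^sup>2 / (4 * real k ^ 4))" .
  have "0 < N\<^sup>2 * p" using N p by simp
  then have "(E_Gamma k \<tau> n)\<^sup>2 > 0" using E by simp
  then have "Var_Gamma k \<tau> n / (E_Gamma k \<tau> n)\<^sup>2 \<le> (real k + 1)\<^sup>2 / (4 * real k ^ 4)"
    using V by (simp add: pos_divide_le_eq mult.commute)
  also have "\<dots> \<le> (2 * real k)\<^sup>2 / (4 * real k ^ 4)"
    using k1 by (intro divide_right_mono power_mono) auto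
  also have "\<dots> = 1 / (real k)\<^sup>2"
    using k1 by (simp add: power2_eq_square power4_eq_xxxx)
  finally show ?thesis .
qed

theorem lemma4:
  fixes \<tau> :: real
  assumes "\<tau> > 0"
  shows "\<exists>K::nat. \<forall>k\<ge>K. \<forall>n::nat. n \<ge> 1 \<longrightarrow>
           real k \<le> 4 / \<tau>\<^sup>2 * ln (real n) - 4 / \<tau>\<^sup>2 * ln (4 / \<tau>\<^sup>2 * ln (real n))
                      - 12 * ln 2 / \<tau>\<^sup>2 \<longrightarrow>
           Var_Gamma k \<tau> n / (E_Gamma k \<tau> n)\<^sup>2 \<le> 1 / (real k)\<^sup>2"
proof -
  obtain K where K: "\<And>k. k \<ge> K \<Longrightarrow> sufficiently_large \<tau> k"
    using eventually_sufficiently_large[OF assms] unfolding eventually_sequentially by blast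
  show ?thesis
  proof (intro exI[of _ K] allI impI)
    fix k n :: nat
    assume "K \<le> k" and threshold:
      "real k \<le> 4 / \<tau>\<^sup>2 * ln (real n) - 4 / \<tau>\<^sup>2 * ln (4 / \<tau>\<^sup>2 * ln (real n)) - 12 * ln 2 / \<tau>\<^sup>2"
    from \<open>K \<le> k\<close> have k: "sufficiently_large \<tau> k" by (rule K)
    show "Var_Gamma k \<tau> n / (E_Gamma k \<tau> n)\<^sup>2 \<le> 1 / (real k)\<^sup>2"
    proof (cases "k \<le> n")
      case True
      show ?thesis
        using Var_Gamma_div_E_Gamma_sq_le[OF assms k True n_large_of_k_le_threshold[OF assms k True threshold]] .
    next
      case False
      \<comment> \<open>no \<open>k\<close>-subsets, so \<open>E_Gamma = 0\<close> and the ratio is \<open>0\<close> by the convention \<open>x / 0 = 0\<close>\<close>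
      then have "E_Gamma k \<tau> n = 0"
        using k by (simp add: E_Gamma_eq_sum_prob submatrices_def k_subsets_empty sufficiently_large_def)
      then show ?thesis by simp
    qed
  qed
qed


end
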